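(* Let $\{A_kB_kC_k\}_{k\ge 0}$ be a chain of Miquel triangles with fixed Miquel point $P$, all nondegenerate, none right-angled, and with $P$ on none of their side lines. If $P$ is the circumcenter of $A_kB_kC_k$, then $P$ is the orthocenter of $A_{k+1}B_{k+1}C_{k+1}$; if $P$ is the orthocenter of $A_kB_kC_k$, then $P$ is the incenter or an excenter of $A_{k+1}B_{k+1}C_{k+1}$; and if $P$ is the incenter or an excenter of $A_kB_kC_k$, then $P$ is the circumcenter of $A_{k+1}B_{k+1}C_{k+1}$. Consequently, if $P$ is the circumcenter of $A_0B_0C_0$, then for every $m\ge 0$, $P$ is the circumcenter of $A_{3m}B_{3m}C_{3m}$, the orthocenter of $A_{3m+1}B_{3m+1}C_{3m+1}$, and the incenter or an excenter of $A_{3m+2}B_{3m+2}C_{3m+2}$.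
   Context: Miquel triangle: given a triangle $ABC$ and a point $P$ not on the lines $BC,CA,AB$, a triangle $XYZ$ with $X$ on line $BC$, $Y$ on line $CA$, $Z$ on line $AB$ is a Miquel triangle of $P$ relative to $ABC$ if $P$ lies on the circles through $A,Y,Z$, through $B,Z,X$, and through $C,X,Y$. Chain: for each $k\ge 0$, $A_{k+1}\in$ line $B_kC_k$, $B_{k+1}\in$ line $C_kA_k$, $C_{k+1}\in$ line $A_kB_k$, and $A_{k+1}B_{k+1}C_{k+1}$ is a Miquel triangle of $P$ relative to $A_kB_kC_k$. *)

theory Defs
  imports "HOL-Analysis.Analysis"
begin

type_synonym point = "real^2"

definition line :: "point \<Rightarrow> point \<Rightarrow> point set" where
  "line A B = {X. collinear {A, B, X}}"

definition on_circle_through :: "point \<Rightarrow> point \<Rightarrow> point \<Rightarrow> point \<Rightarrow> bool" where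
  "on_circle_through P U V W \<longleftrightarrow> \<not> collinear {U, V, W} \<and>
     (\<exists>c. dist c U = dist c V \<and> dist c U = dist c W \<and> dist c U = dist c P)"

definition miquel_triangle ::
  "point \<Rightarrow> point \<Rightarrow> point \<Rightarrow> point \<Rightarrow> point \<Rightarrow> point \<Rightarrow> point \<Rightarrow> bool" where
  "miquel_triangle P A B C X Y Z \<longleftrightarrow>
     P \<notin> line B C \<and> P \<notin> line C A \<and> P \<notin> line A B \<and>
     X \<in> line B C \<and> Y \<in> line C A \<and> Z \<in> line A B \<and>
     on_circle_through P A Y Z \<and> on_circle_through P B Z X \<and> on_circle_through P C X Y"

definition nondegenerate :: "point \<Rightarrow> point \<Rightarrow> point \<Rightarrow> bool" where
  "nondegenerate A B C \<longleftrightarrow> \<not> collinear {A, B, C}"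

definition right_angled :: "point \<Rightarrow> point \<Rightarrow> point \<Rightarrow> bool" where
  "right_angled A B C \<longleftrightarrow>
     orthogonal (B - A) (C - A) \<or> orthogonal (A - B) (C - B) \<or> orthogonal (A - C) (B - C)"

definition circumcenter :: "point \<Rightarrow> point \<Rightarrow> point \<Rightarrow> point \<Rightarrow> bool" where
  "circumcenter P A B C \<longleftrightarrow> dist P A = dist P B \<and> dist P A = dist P C"

definition orthocenter :: "point \<Rightarrow> point \<Rightarrow> point \<Rightarrow> point \<Rightarrow> bool" where
  "orthocenter P A B C \<longleftrightarrow>
     orthogonal (P - A) (C - B) \<and> orthogonal (P - B) (A - C) \<and> orthogonal (P - C) (B - A)"

text \<open>P is the centre of a circle tangent to all three side lines (incircle or an excircle).\<close>
definition in_or_excenter :: "point \<Rightarrow> point \<Rightarrow> point \<Rightarrow> point \<Rightarrow> bool" where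
  "in_or_excenter P A B C \<longleftrightarrow> (\<exists>r>0.
     infdist P (line B C) = r \<and> infdist P (line C A) = r \<and> infdist P (line A B) = r)"

end

theory Submission
  imports Defs
begin

text \<open>
  A Miquel triangle of P is the image of the pedal triangle of P (the feet of the perpendiculars
  from P to the side lines) under a spiral similarity about P: each of its vertices is seen from P
  under the same signed angle to the corresponding foot, because on each Miquel circle the antipode
  of P determines that angle from either of the two vertices on it. A spiral similarity about P
  preserves P being the circumcenter, the orthocenter or equidistant from the side lines, so only
  the pedal triangle matters. For the circumcenter it is the medial triangle, whose orthocenter is
  P. For the orthocenter it is the orthic triangle; writing q for the common value of the inner
  products PA.PB = PB.PC = PC.PA, each of its side lines has distance q^2 / (|PA| |PB| |PC|)
  from P. For an in- or excenter the feet are the points of tangency, all at distance r from P.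
\<close>

section \<open>Planar coordinates\<close>

definition cross2 :: "real^2 \<Rightarrow> real^2 \<Rightarrow> real" where
  "cross2 u v = u$1 * v$2 - u$2 * v$1"

definition rot90 :: "real^2 \<Rightarrow> real^2" where
  "rot90 v = (\<chi> i. if i = 1 then - v$2 else v$1)"

lemma rot90_nth [simp]: "rot90 v $ 1 = - v$2" "rot90 v $ 2 = v$1"
  by (simp_all add: rot90_def)

lemma inner_vec2: "inner (u::real^2) v = u$1 * v$1 + u$2 * v$2"
  by (simp add: inner_vec_def sum_2)

lemma vec2_eq_iff: "(u::real^2) = v \<longleftrightarrow> u$1 = v$1 \<and> u$2 = v$2"
  by (simp add: vec_eq_iff forall_2)

lemma norm_vec2_sq: "norm (u::real^2)^2 = u$1^2 + u$2^2"
  unfolding power2_norm_eq_inner inner_vec2 by (simp add: power2_eq_square)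

lemma lagrange_identity_vec2: "norm u^2 * norm v^2 = (inner u v)^2 + (cross2 u v)^2"
  unfolding norm_vec2_sq inner_vec2 cross2_def by algebra

lemma inner_rot90_left: "inner (rot90 u) v = cross2 u v"
  by (simp add: inner_vec2 cross2_def)

lemma inner_rot90_right: "inner v (rot90 u) = cross2 u v"
  by (simp add: inner_vec2 cross2_def)

lemma eq_0_if_inner_cross2_eq_0:
  assumes "cross2 p d \<noteq> 0" "inner v p = 0" "inner v d = 0"
  shows "v = 0"
proof -
  have "v$1 * cross2 p d = 0" "v$2 * cross2 p d = 0"
    using assms(2,3) unfolding inner_vec2 cross2_def by algebra+
  with assms(1) show ?thesis by (simp add: vec2_eq_iff)
qed

lemma cross2_eq_0_iff_parallel: "cross2 u v = 0 \<longleftrightarrow> u = 0 \<or> (\<exists>c. v = c *\<^sub>R u)"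
proof
  assume h: "cross2 u v = 0"
  show "u = 0 \<or> (\<exists>c. v = c *\<^sub>R u)"
  proof (cases "u$1 = 0")
    case True
    show ?thesis
    proof (cases "u$2 = 0")
      case False
      have "v = (v$2 / u$2) *\<^sub>R u"
        using h True False by (simp add: vec2_eq_iff cross2_def field_simps)
      then show ?thesis by blast
    qed (use True in \<open>simp add: vec2_eq_iff\<close>)
  next
    case False
    have "v = (v$1 / u$1) *\<^sub>R u"
      using h False by (simp add: vec2_eq_iff cross2_def field_simps)
    then show ?thesis by blast
  qed
qed (auto simp: cross2_def)

lemma collinear_iff_cross2: "collinear {A, B, X::real^2} \<longleftrightarrow> cross2 (B - A) (X - A) = 0"
proof -
  have "collinear {A, B, X} \<longleftrightarrow> collinear {B, A, X}" by (simp add: insert_commute)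
  also have "\<dots> \<longleftrightarrow> collinear {0, B - A, X - A}" by (rule collinear_3) simp
  also have "\<dots> \<longleftrightarrow> cross2 (B - A) (X - A) = 0"
    unfolding collinear_lemma cross2_eq_0_iff_parallel by (metis scale_zero_left)
  finally show ?thesis .
qed

section \<open>Lines and feet of perpendiculars\<close>

lemma mem_line_iff_cross2: "X \<in> line B C \<longleftrightarrow> cross2 (B - X) (C - X) = 0"
  by (simp add: line_def collinear_iff_cross2 cross2_def algebra_simps)

lemma line_commute: "line B C = line C B"
  by (simp add: line_def insert_commute)

lemma endpoints_in_line: "B \<in> line B C" "C \<in> line B C"
  by (simp_all add: line_def collinear_2 insert_commute)

lemma line_self: "line B B = UNIV"
  by (simp add: line_def collinear_2)

lemma mem_line_iff_affine:
  assumes "B \<noteq> C"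
  shows "X \<in> line B C \<longleftrightarrow> (\<exists>t. X = B + t *\<^sub>R (C - B))"
proof -
  have "X \<in> line B C \<longleftrightarrow> (\<exists>t. X - B = t *\<^sub>R (C - B))"
    using assms unfolding line_def collinear_iff_cross2 cross2_eq_0_iff_parallel by simp
  then show ?thesis by (metis add_diff_cancel_left' diff_add_cancel add.commute)
qed

definition foot :: "point \<Rightarrow> point \<Rightarrow> point \<Rightarrow> point" where
  "foot P B C = B + (inner (P - B) (C - B) / inner (C - B) (C - B)) *\<^sub>R (C - B)"

lemma foot_in_line: "foot P B C \<in> line B C"
  unfolding line_def collinear_iff_cross2 foot_def by (simp add: cross2_def)

lemma orthogonal_foot:
  assumes "B \<noteq> C"
  shows "orthogonal (P - foot P B C) (C - B)"
proof -
  have "inner (C - B) (C - B) \<noteq> 0" using assms by simp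
  then show ?thesis by (simp add: orthogonal_def foot_def inner_diff_left inner_add_left)
qed

lemma foot_unique:
  assumes "B \<noteq> C" "X \<in> line B C" "orthogonal (P - X) (C - B)"
  shows "foot P B C = X"
proof -
  obtain t where X: "X = B + t *\<^sub>R (C - B)"
    using assms(1,2) mem_line_iff_affine by blast
  have "inner (P - B) (C - B) = t * inner (C - B) (C - B)"
    using assms(3) unfolding X orthogonal_def by (simp add: inner_diff_left inner_add_left)
  with assms(1) show ?thesis by (simp add: foot_def X)
qed

lemma dist_foot_le:
  assumes "B \<noteq> C" "X \<in> line B C"
  shows "dist P (foot P B C) \<le> dist P X"
proof -
  obtain s t where F: "foot P B C = B + s *\<^sub>R (C - B)" and X: "X = B + t *\<^sub>R (C - B)"
    using assms foot_in_line mem_line_iff_affine by metis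
  have "foot P B C - X = (s - t) *\<^sub>R (C - B)" unfolding F X by (simp add: scaleR_diff_left)
  then have "orthogonal (P - foot P B C) (foot P B C - X)"
    using orthogonal_foot[OF assms(1)] by (simp add: orthogonal_clauses)
  then have "(dist P X)^2 = (dist P (foot P B C))^2 + (norm (foot P B C - X))^2"
    using norm_add_Pythagorean by (fastforce simp: dist_norm)
  then have "(dist P (foot P B C))^2 \<le> (dist P X)^2" by simp
  then show ?thesis by (rule power2_le_imp_le) simp
qed

lemma infdist_line_eq_dist_foot:
  assumes "B \<noteq> C"
  shows "infdist P (line B C) = dist P (foot P B C)"
proof (rule antisym)
  show "infdist P (line B C) \<le> dist P (foot P B C)"
    by (rule infdist_le[OF foot_in_line])
  show "dist P (foot P B C) \<le> infdist P (line B C)"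
    unfolding infdist_notempty[OF foot_in_line[THEN ex_in_conv[THEN iffD1, OF exI]]]
    using foot_in_line dist_foot_le[OF assms] by (intro cINF_greatest) blast+
qed

lemma infdist_line_cross2:
  assumes "B \<noteq> C"
  shows "infdist P (line B C) = \<bar>cross2 (B - P) (C - P)\<bar> / dist B C"
proof -
  let ?F = "foot P B C"
  obtain s where F: "?F = B + s *\<^sub>R (C - B)"
    using foot_in_line mem_line_iff_affine[OF assms] by metis
  have "cross2 (P - ?F) (C - B) = - cross2 (B - P) (C - P)"
    unfolding F by (simp add: cross2_def algebra_simps)
  moreover have "inner (P - ?F) (C - B) = 0"
    using orthogonal_foot[OF assms] by (simp add: orthogonal_def)
  ultimately have "(dist P ?F * dist B C)^2 = \<bar>cross2 (B - P) (C - P)\<bar>^2"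
    using lagrange_identity_vec2[of "P - ?F" "C - B"]
    by (simp add: dist_norm power_mult_distrib norm_minus_commute)
  then have "dist P ?F * dist B C = \<bar>cross2 (B - P) (C - P)\<bar>"
    by (metis power2_eq_imp_eq abs_ge_zero zero_le_dist zero_le_mult_iff)
  then show ?thesis
    using assms infdist_line_eq_dist_foot[OF assms] by (simp add: field_simps)
qed

lemma infdist_line_pos:
  assumes "P \<notin> line B C"
  shows "infdist P (line B C) > 0"
proof -
  have "B \<noteq> C" using assms line_self by auto
  moreover have "cross2 (B - P) (C - P) \<noteq> 0"
    using assms mem_line_iff_cross2 by blast
  ultimately show ?thesis by (simp add: infdist_line_cross2)
qed

section \<open>Pedal triangles\<close>

lemma orthocenter_iff_inner_eq:
  "orthocenter P A B C \<longleftrightarrow>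
     inner (A - P) (B - P) = inner (B - P) (C - P) \<and> inner (B - P) (C - P) = inner (C - P) (A - P)"
proof -
  have "C - B = (C - P) - (B - P)" "A - C = (A - P) - (C - P)" "B - A = (B - P) - (A - P)"
    by simp_all
  then show ?thesis
    unfolding orthocenter_def orthogonal_def
    by (smt (verit) inner_commute inner_diff_left inner_diff_right)
qed

lemma foot_eq_midpoint:
  assumes "dist P B = dist P C"
  shows "foot P B C = midpoint B C"
proof (cases "B = C")
  case False
  have "norm (P - B)^2 = norm ((P - B) - (C - B))^2"
    using assms by (simp add: dist_norm)
  then have "2 * inner (P - B) (C - B) = inner (C - B) (C - B)"
    by (simp add: power2_norm_eq_inner inner_diff_left inner_diff_right inner_commute)
  with False have half: "inner (P - B) (C - B) / inner (C - B) (C - B) = 1 / 2"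
    by (simp add: field_simps)
  show ?thesis
    unfolding foot_def midpoint_def half by (simp add: scaleR_diff_right scaleR_add_right)
qed (simp add: foot_def)

lemma orthocenter_midpoints:
  assumes "circumcenter P A B C"
  shows "orthocenter P (midpoint B C) (midpoint C A) (midpoint A B)"
proof -
  have "norm (A - P)^2 = norm (B - P)^2" "norm (A - P)^2 = norm (C - P)^2"
    using assms by (simp_all add: circumcenter_def dist_norm norm_minus_commute)
  then show ?thesis
    unfolding orthocenter_iff_inner_eq norm_vec2_sq inner_vec2 midpoint_def
    by (simp add: field_simps) (intro conjI; algebra)
qed

text \<open>The two hypotheses say that P lies on the altitude from A.\<close>
lemma foot_eq_scaled:
  assumes "inner (A - P) (B - P) = q" "inner (A - P) (C - P) = q" "B \<noteq> C" "A \<noteq> P"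
  shows "foot P B C = P + (q / inner (A - P) (A - P)) *\<^sub>R (A - P)"
proof (rule foot_unique[OF assms(3)])
  define a b c where "a = A - P" and "b = B - P" and "c = C - P"
  define k where "k = q / inner a a"
  have aa: "inner a a \<noteq> 0" using assms(4) by (simp add: a_def)
  have plucker: "inner a a * cross2 b c - inner a b * cross2 a c + inner a c * cross2 a b = 0"
    unfolding inner_vec2 cross2_def by algebra
  have "inner a a * cross2 (b - k *\<^sub>R a) (c - k *\<^sub>R a)
      = inner a a * cross2 b c - q * cross2 a c + q * cross2 a b"
    using aa unfolding k_def by (simp add: cross2_def field_simps)
  also have "\<dots> = 0"
    using plucker assms(1,2) by (simp add: a_def b_def c_def)
  finally have "cross2 (b - k *\<^sub>R a) (c - k *\<^sub>R a) = 0" using aa by simp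
  then show "P + (q / inner (A - P) (A - P)) *\<^sub>R (A - P) \<in> line B C"
    unfolding mem_line_iff_cross2 by (simp add: a_def b_def c_def k_def algebra_simps)
  show "orthogonal (P - (P + (q / inner (A - P) (A - P)) *\<^sub>R (A - P))) (C - B)"
    using assms(1,2) by (simp add: orthogonal_def inner_diff_right)
qed

lemma cross2_power2_mult_inner:
  assumes "inner a b = q" "inner b c = q" "inner c a = q"
  shows "(cross2 b c)^2 * inner a a = q^2 * (inner b b + inner c c - 2 * q)"
proof -
  have "(cross2 b c)^2 = inner b b * inner c c - (inner b c)^2"
    unfolding cross2_def inner_vec2 by algebra
  moreover \<comment> \<open>The Gram determinant of three vectors in the plane vanishes.\<close>
  have "inner a a * inner b b * inner c c + 2 * inner a b * inner b c * inner c a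
      - inner a a * (inner b c)^2 - inner b b * (inner c a)^2 - inner c c * (inner a b)^2 = 0"
    unfolding inner_vec2 by algebra
  ultimately show ?thesis using assms by algebra
qed

lemma infdist_orthic_side:
  assumes q: "inner (A - P) (B - P) = q" "inner (B - P) (C - P) = q" "inner (C - P) (A - P) = q"
    and off: "P \<notin> line A B" "P \<notin> line C A" and feet: "foot P C A \<noteq> foot P A B"
  shows "(infdist P (line (foot P C A) (foot P A B)))^2
           * (norm (A - P)^2 * norm (B - P)^2 * norm (C - P)^2) = q^4"
proof -
  define a b c where "a = A - P" and "b = B - P" and "c = C - P"
  have ne: "A \<noteq> B" "C \<noteq> A" "B \<noteq> P" "C \<noteq> P"
    using off endpoints_in_line line_self by (metis UNIV_I)+
  have bb: "inner b b \<noteq> 0" and cc: "inner c c \<noteq> 0"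
    using ne by (simp_all add: b_def c_def)
  have F: "foot P C A = P + (q / inner b b) *\<^sub>R b"
    using foot_eq_scaled[of B P C q A] q ne by (simp add: b_def inner_commute)
  have G: "foot P A B = P + (q / inner c c) *\<^sub>R c"
    using foot_eq_scaled[of C P A q B] q ne by (simp add: c_def inner_commute)
  have q': "inner a b = q" "inner b c = q" "inner c a = q"
    using q by (simp_all add: a_def b_def c_def)
  define D where "D = (dist (foot P C A) (foot P A B))^2"
  have D: "D * (inner b b * inner c c) = q^2 * (inner b b + inner c c - 2 * q)"
    using bb cc q'(2) unfolding D_def F G dist_norm power2_norm_eq_inner
    by (simp add: inner_diff_left inner_diff_right inner_commute field_simps power2_eq_square)
  have "D \<noteq> 0" using feet by (simp add: D_def)
  have cross_feet:
    "cross2 (foot P C A - P) (foot P A B - P) = q^2 / (inner b b * inner c c) * cross2 b c"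
    unfolding F G using bb cc by (simp add: cross2_def field_simps power2_eq_square)
  have "(infdist P (line (foot P C A) (foot P A B)))^2
      = (cross2 (foot P C A - P) (foot P A B - P))^2 / D"
    using infdist_line_cross2[OF feet, of P] by (simp add: D_def power_divide)
  then have "(infdist P (line (foot P C A) (foot P A B)))^2 * (inner a a * inner b b * inner c c)
      = q^4 * ((cross2 b c)^2 * inner a a) / (D * (inner b b * inner c c))"
    using bb cc by (simp add: cross_feet field_simps power2_eq_square eval_nat_numeral)
  also have "\<dots> = q^4"
    using \<open>D \<noteq> 0\<close> bb cc by (simp add: cross2_power2_mult_inner[OF q'] D[symmetric])
  finally show ?thesis by (simp add: power2_norm_eq_inner a_def b_def c_def)
qed

lemma circumcenter_feet:
  assumes "in_or_excenter P A B C" "P \<notin> line B C" "P \<notin> line C A" "P \<notin> line A B"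
  shows "circumcenter P (foot P B C) (foot P C A) (foot P A B)"
proof -
  have "B \<noteq> C" "C \<noteq> A" "A \<noteq> B"
    using assms(2-4) line_self by auto
  with assms(1) show ?thesis
    by (auto simp: in_or_excenter_def circumcenter_def infdist_line_eq_dist_foot)
qed

section \<open>Spiral similarities about a point\<close>

text \<open>Rotation about P by arctan l composed with scaling by sqrt (1 + l^2) about P.\<close>
definition spiral :: "point \<Rightarrow> real \<Rightarrow> point \<Rightarrow> point" where
  "spiral P l X = X + l *\<^sub>R rot90 (X - P)"

lemma spiral_center [simp]: "spiral P l P = P"
  by (simp add: spiral_def vec2_eq_iff)

lemma spiral_diff: "spiral P l U - spiral P l V = (U - V) + l *\<^sub>R rot90 (U - V)"
  by (simp add: spiral_def vec2_eq_iff algebra_simps)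

lemma inner_spiral_diff:
  "inner (spiral P l U - spiral P l V) (spiral P l U' - spiral P l V')
     = (1 + l^2) * inner (U - V) (U' - V')"
  unfolding spiral_diff inner_vec2 by (simp add: power2_eq_square) algebra

lemma dist_spiral: "dist (spiral P l U) (spiral P l V) = sqrt (1 + l^2) * dist U V"
proof -
  have "(dist (spiral P l U) (spiral P l V))^2 = (1 + l^2) * (dist U V)^2"
    using inner_spiral_diff[of P l U V U V] by (simp add: dist_norm power2_norm_eq_inner)
  then show ?thesis
    by (metis real_sqrt_mult real_sqrt_abs abs_of_nonneg zero_le_dist)
qed

lemma cross2_spiral:
  "cross2 (spiral P l U - P) (spiral P l V - P) = (1 + l^2) * cross2 (U - P) (V - P)"
  unfolding spiral_def cross2_def by (simp add: power2_eq_square) algebra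

lemma spiral_param_unique:
  assumes "spiral P s V = spiral P t V" "V \<noteq> P"
  shows "s = t"
proof -
  have "(s - t) *\<^sub>R rot90 (V - P) = 0"
    using assms(1) by (simp add: spiral_def scaleR_diff_left)
  moreover have "rot90 (V - P) \<noteq> 0"
    using assms(2) by (auto simp: vec2_eq_iff)
  ultimately show ?thesis by simp
qed

lemma orthocenter_spiral:
  assumes "orthocenter P U V W"
  shows "orthocenter P (spiral P l U) (spiral P l V) (spiral P l W)"
proof -
  have "inner (P - spiral P l X) (spiral P l Z - spiral P l Y) = (1 + l^2) * inner (P - X) (Z - Y)"
    for X Y Z
    using inner_spiral_diff[of P l P X Z Y] by simp
  with assms show ?thesis by (simp add: orthocenter_def orthogonal_def)
qed

lemma circumcenter_spiral:
  assumes "circumcenter P U V W"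
  shows "circumcenter P (spiral P l U) (spiral P l V) (spiral P l W)"
proof -
  have "dist P (spiral P l X) = sqrt (1 + l^2) * dist P X" for X
    using dist_spiral[of P l P X] by simp
  with assms show ?thesis by (simp add: circumcenter_def)
qed

lemma infdist_line_spiral:
  assumes "U \<noteq> V"
  shows "infdist P (line (spiral P l U) (spiral P l V)) = sqrt (1 + l^2) * infdist P (line U V)"
proof -
  define s where "s = sqrt (1 + l^2)"
  have s: "s > 0" "s * s = 1 + l^2"
    by (simp_all add: s_def add_pos_nonneg)
  have "dist (spiral P l U) (spiral P l V) = s * dist U V"
    by (simp add: dist_spiral s_def)
  with s(1) assms have ne: "spiral P l U \<noteq> spiral P l V"
    by auto
  have "infdist P (line (spiral P l U) (spiral P l V))
      = \<bar>(1 + l^2) * cross2 (U - P) (V - P)\<bar> / (s * dist U V)"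
    unfolding s_def using infdist_line_cross2[OF ne, of P] by (simp only: cross2_spiral dist_spiral)
  also have "\<dots> = s * (\<bar>cross2 (U - P) (V - P)\<bar> / dist U V)"
    unfolding s(2)[symmetric] using s(1) by (simp add: abs_mult)
  finally show ?thesis
    using assms by (simp add: infdist_line_cross2 s_def)
qed

section \<open>Miquel triangles\<close>

text \<open>For X on line B C with foot F, the tangent of the signed angle F P X.\<close>
definition foot_angle_tan :: "point \<Rightarrow> point \<Rightarrow> point \<Rightarrow> point \<Rightarrow> real" where
  "foot_angle_tan P B C X = inner (X - P) (C - B) / cross2 (B - P) (C - P)"

lemma foot_angle_tan_commute: "foot_angle_tan P B C X = foot_angle_tan P C B X"
proof -
  have "inner (X - P) (B - C) = - inner (X - P) (C - B)"
    by (metis inner_minus_right minus_diff_eq)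
  moreover have "cross2 (C - P) (B - P) = - cross2 (B - P) (C - P)"
    by (simp add: cross2_def)
  ultimately show ?thesis by (simp add: foot_angle_tan_def)
qed

lemma spiral_foot_angle_tan:
  assumes "P \<notin> line B C" "X \<in> line B C"
  shows "spiral P (foot_angle_tan P B C X) (foot P B C) = X"
proof -
  define d F l where "d = C - B" and "F = foot P B C" and "l = foot_angle_tan P B C X"
  have "B \<noteq> C" using assms(1) line_self by auto
  obtain s t where F: "F = B + s *\<^sub>R d" and X: "X = B + t *\<^sub>R d"
    using assms(2) foot_in_line mem_line_iff_affine[OF \<open>B \<noteq> C\<close>]
    unfolding F_def d_def by metis
  have perp: "inner (F - P) d = 0"
    using orthogonal_foot[OF \<open>B \<noteq> C\<close>, of P]
    by (simp add: orthogonal_def F_def d_def inner_diff_left)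
  have "cross2 (B - P) (C - P) \<noteq> 0"
    using assms(1) mem_line_iff_cross2 by blast
  moreover have "cross2 (F - P) d = cross2 (B - P) (C - P)"
    unfolding F d_def by (simp add: cross2_def algebra_simps)
  ultimately have l: "l * cross2 (F - P) d = inner (X - P) d"
    by (simp add: l_def foot_angle_tan_def d_def)
  have "X - spiral P l F = 0"
  proof (rule eq_0_if_inner_cross2_eq_0)
    have "cross2 (rot90 d) d + (norm d)^2 = 0"
      unfolding norm_vec2_sq cross2_def by (simp add: power2_eq_square)
    then show "cross2 (rot90 d) d \<noteq> 0"
      using \<open>B \<noteq> C\<close> by (auto simp: d_def)
    show "inner (X - spiral P l F) (rot90 d) = 0"
      using perp unfolding X F spiral_def inner_vec2 by simp algebra
    show "inner (X - spiral P l F) d = 0"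
      using perp l unfolding spiral_def inner_vec2 cross2_def by (simp add: algebra_simps)
  qed
  then show ?thesis by (simp add: l_def F_def)
qed

text \<open>2 M - P is the antipode of P on the circle with centre M through P, V and Y.\<close>
lemma antipode_eq_spiral:
  assumes "dist M P = dist M V" "dist M P = dist M Y" "Y \<in> line V W" "Y \<noteq> V" "P \<notin> line V W"
  shows "2 *\<^sub>R M - P = spiral P (foot_angle_tan P V W Y) V"
proof -
  define c p y d where "c = M - P" and "p = V - P" and "y = Y - P" and "d = W - V"
  define l where "l = foot_angle_tan P V W Y"
  have chord: "2 * inner c (U - P) = inner (U - P) (U - P)" if "dist M P = dist M U" for U
  proof -
    have "norm c ^ 2 = norm (c - (U - P)) ^ 2"
      using that by (simp add: c_def dist_norm norm_minus_commute)
    then show ?thesis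
      by (simp add: power2_norm_eq_inner inner_diff_left inner_diff_right inner_commute)
  qed
  have hp: "2 * inner c p = inner p p" and hy: "2 * inner c y = inner y y"
    using chord assms(1,2) by (simp_all add: p_def y_def)
  have "V \<noteq> W" using assms(5) line_self by auto
  then obtain t where "Y = V + t *\<^sub>R d"
    using assms(3) mem_line_iff_affine by (auto simp: d_def)
  then have y: "y = p + t *\<^sub>R d" and "t \<noteq> 0"
    using assms(4) by (auto simp: y_def p_def)
  have cpd: "cross2 (V - P) (W - P) = cross2 p d"
    by (simp add: p_def d_def cross2_def algebra_simps)
  then have cr: "cross2 p d \<noteq> 0"
    using assms(5) mem_line_iff_cross2[of P V W] by simp
  have l: "l * cross2 p d = inner y d"
    using cr cpd by (simp add: l_def foot_angle_tan_def y_def d_def)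
  have "t * (2 * inner c d) = t * (2 * inner p d + t * inner d d)"
    using hp hy unfolding y by (simp add: inner_add_right inner_add_left algebra_simps inner_commute)
  then have hd: "2 * inner c d = 2 * inner p d + t * inner d d"
    using \<open>t \<noteq> 0\<close> by simp
  have "2 *\<^sub>R c - p - l *\<^sub>R rot90 p = 0"
  proof (rule eq_0_if_inner_cross2_eq_0[OF cr])
    show "inner (2 *\<^sub>R c - p - l *\<^sub>R rot90 p) p = 0"
      using hp by (simp add: inner_diff_left inner_rot90_left cross2_def)
    show "inner (2 *\<^sub>R c - p - l *\<^sub>R rot90 p) d = 0"
      using hd l unfolding y
      by (simp add: inner_diff_left inner_add_right inner_rot90_right inner_commute algebra_simps)
  qed
  then show ?thesis
    by (simp add: spiral_def c_def p_def l_def algebra_simps scaleR_2)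
qed

lemma foot_angle_tan_eq_on_circle:
  assumes "on_circle_through P V Y Z" "Y \<in> line V W" "Z \<in> line V U"
    and "P \<notin> line V W" "P \<notin> line V U"
  shows "foot_angle_tan P V W Y = foot_angle_tan P V U Z"
proof -
  obtain M where M: "dist M V = dist M Y" "dist M V = dist M Z" "dist M V = dist M P"
    and "\<not> collinear {V, Y, Z}"
    using assms(1) unfolding on_circle_through_def by blast
  then have "Y \<noteq> V" "Z \<noteq> V"
    by (auto simp: collinear_2 insert_commute)
  have "spiral P (foot_angle_tan P V W Y) V = spiral P (foot_angle_tan P V U Z) V"
    using antipode_eq_spiral[of M P V Y W] antipode_eq_spiral[of M P V Z U] M assms(2-5)
      \<open>Y \<noteq> V\<close> \<open>Z \<noteq> V\<close> by simp
  moreover have "V \<noteq> P" using assms(4) endpoints_in_line by blast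
  ultimately show ?thesis by (rule spiral_param_unique)
qed

lemma miquel_triangle_spiral_feet:
  assumes "miquel_triangle P A B C X Y Z"
  obtains l
    where "X = spiral P l (foot P B C)" "Y = spiral P l (foot P C A)" "Z = spiral P l (foot P A B)"
proof -
  note m = assms[unfolded miquel_triangle_def]
  have "foot_angle_tan P A C Y = foot_angle_tan P A B Z"
    using m foot_angle_tan_eq_on_circle[of P A Y Z C B] by (simp add: line_commute)
  moreover have "foot_angle_tan P B A Z = foot_angle_tan P B C X"
    using m foot_angle_tan_eq_on_circle[of P B Z X A C] by (simp add: line_commute)
  ultimately show ?thesis
    using m spiral_foot_angle_tan[of P B C X] spiral_foot_angle_tan[of P C A Y]
      spiral_foot_angle_tan[of P A B Z] by (metis that foot_angle_tan_commute)
qed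

lemma miquel_circumcenter_orthocenter:
  assumes "miquel_triangle P A B C X Y Z" "circumcenter P A B C"
  shows "orthocenter P X Y Z"
proof -
  obtain l
    where "X = spiral P l (foot P B C)" "Y = spiral P l (foot P C A)" "Z = spiral P l (foot P A B)"
    using miquel_triangle_spiral_feet[OF assms(1)] .
  moreover have "foot P B C = midpoint B C" "foot P C A = midpoint C A" "foot P A B = midpoint A B"
    using assms(2) by (simp_all add: circumcenter_def foot_eq_midpoint)
  ultimately show ?thesis
    using orthocenter_spiral[OF orthocenter_midpoints[OF assms(2)]] by simp
qed

lemma miquel_orthocenter_in_or_excenter:
  assumes "miquel_triangle P A B C X Y Z" "orthocenter P A B C"
    and off: "P \<notin> line Y Z" "P \<notin> line Z X" "P \<notin> line X Y"
  shows "in_or_excenter P X Y Z"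
proof -
  obtain l where X: "X = spiral P l (foot P B C)" and Y: "Y = spiral P l (foot P C A)"
    and Z: "Z = spiral P l (foot P A B)"
    using miquel_triangle_spiral_feet[OF assms(1)] .
  have off_ABC: "P \<notin> line B C" "P \<notin> line C A" "P \<notin> line A B"
    using assms(1) by (simp_all add: miquel_triangle_def)
  define q where "q = inner (A - P) (B - P)"
  have q: "inner (A - P) (B - P) = q" "inner (B - P) (C - P) = q" "inner (C - P) (A - P) = q"
    using assms(2) by (simp_all add: q_def orthocenter_iff_inner_eq)
  have feet: "foot P C A \<noteq> foot P A B" "foot P A B \<noteq> foot P B C" "foot P B C \<noteq> foot P C A"
    using off line_self unfolding X Y Z by auto
  define N where "N = norm (A - P)^2 * norm (B - P)^2 * norm (C - P)^2"
  have "N \<noteq> 0"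
    using off_ABC endpoints_in_line by (auto simp: N_def)
  have "(infdist P (line (foot P C A) (foot P A B)))^2 * N = q^4"
    using infdist_orthic_side[OF q off_ABC(3,2) feet(1)] by (simp add: N_def)
  moreover have "(infdist P (line (foot P A B) (foot P B C)))^2 * N = q^4"
    using infdist_orthic_side[OF q(2,3,1) off_ABC(1,3) feet(2)] by (simp add: N_def mult_ac)
  moreover have "(infdist P (line (foot P B C) (foot P C A)))^2 * N = q^4"
    using infdist_orthic_side[OF q(3,1,2) off_ABC(2,1) feet(3)] by (simp add: N_def mult_ac)
  ultimately have
    "infdist P (line (foot P C A) (foot P A B)) = infdist P (line (foot P A B) (foot P B C))"
    "infdist P (line (foot P C A) (foot P A B)) = infdist P (line (foot P B C) (foot P C A))"
    using \<open>N \<noteq> 0\<close> by (metis power2_eq_imp_eq infdist_nonneg mult_right_cancel)+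
  then have "infdist P (line Y Z) = infdist P (line Z X)" "infdist P (line Y Z) = infdist P (line X Y)"
    unfolding X Y Z using feet by (simp_all add: infdist_line_spiral)
  then show ?thesis
    using infdist_line_pos[OF off(1)] by (auto simp: in_or_excenter_def)
qed

lemma miquel_in_or_excenter_circumcenter:
  assumes "miquel_triangle P A B C X Y Z" "in_or_excenter P A B C"
  shows "circumcenter P X Y Z"
proof -
  obtain l
    where "X = spiral P l (foot P B C)" "Y = spiral P l (foot P C A)" "Z = spiral P l (foot P A B)"
    using miquel_triangle_spiral_feet[OF assms(1)] .
  moreover have "circumcenter P (foot P B C) (foot P C A) (foot P A B)"
    using assms by (intro circumcenter_feet) (simp_all add: miquel_triangle_def)
  ultimately show ?thesis
    using circumcenter_spiral by simp
qed

theorem corollary4: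
  fixes P :: point and A B C :: "nat \<Rightarrow> point"
  assumes chain: "\<And>k. miquel_triangle P (A k) (B k) (C k) (A (Suc k)) (B (Suc k)) (C (Suc k))"
    and nondeg: "\<And>k. nondegenerate (A k) (B k) (C k)"
    and not_right: "\<And>k. \<not> right_angled (A k) (B k) (C k)"
    and off_lines: "\<And>k. P \<notin> line (B k) (C k) \<and> P \<notin> line (C k) (A k) \<and> P \<notin> line (A k) (B k)"
  shows "(\<forall>k. circumcenter P (A k) (B k) (C k) \<longrightarrow> orthocenter P (A (Suc k)) (B (Suc k)) (C (Suc k)))
       \<and> (\<forall>k. orthocenter P (A k) (B k) (C k) \<longrightarrow> in_or_excenter P (A (Suc k)) (B (Suc k)) (C (Suc k)))
       \<and> (\<forall>k. in_or_excenter P (A k) (B k) (C k) \<longrightarrow> circumcenter P (A (Suc k)) (B (Suc k)) (C (Suc k)))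
       \<and> (circumcenter P (A 0) (B 0) (C 0) \<longrightarrow>
           (\<forall>m. circumcenter P (A (3*m)) (B (3*m)) (C (3*m))
              \<and> orthocenter P (A (3*m+1)) (B (3*m+1)) (C (3*m+1))
              \<and> in_or_excenter P (A (3*m+2)) (B (3*m+2)) (C (3*m+2))))"
proof -
  have off_next: "P \<notin> line (B (Suc k)) (C (Suc k))" "P \<notin> line (C (Suc k)) (A (Suc k))"
      "P \<notin> line (A (Suc k)) (B (Suc k))" for k
    using off_lines by blast+
  have circ_orth:
    "circumcenter P (A k) (B k) (C k) \<Longrightarrow> orthocenter P (A (Suc k)) (B (Suc k)) (C (Suc k))" for k
    using miquel_circumcenter_orthocenter[OF chain] .
  have orth_exc:
    "orthocenter P (A k) (B k) (C k) \<Longrightarrow> in_or_excenter P (A (Suc k)) (B (Suc k)) (C (Suc k))" for k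
    using miquel_orthocenter_in_or_excenter[OF chain _ off_next] .
  have exc_circ:
    "in_or_excenter P (A k) (B k) (C k) \<Longrightarrow> circumcenter P (A (Suc k)) (B (Suc k)) (C (Suc k))" for k
    using miquel_in_or_excenter_circumcenter[OF chain] .
  have "circumcenter P (A (3*m)) (B (3*m)) (C (3*m))" if "circumcenter P (A 0) (B 0) (C 0)" for m
  proof (induction m)
    case (Suc m)
    then show ?case
      using circ_orth orth_exc exc_circ by (simp add: numeral_3_eq_3)
  qed (use that in simp)
  then show ?thesis
    using circ_orth orth_exc exc_circ by (simp add: numeral_2_eq_2)
qed

end
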